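(* Assume the rearrangement setting described in the context, and assume additionally that: - $X$ is convex in $R$; and - there is no walk in $R$ that starts in $M$ and ends in $Y$, and no walk in $R$ that starts in $Y$ and ends in $M$. Let $z_0,\dots,z_I$ be a walk in $S$, and let $K=\{i\in\{1,\dots,I\}: z_{i-1}z_i\notin A_r\}$. Then $\#K\le 2$. Moreover, if $K=\{k,\ell\}$ with $k<\ell$, then there exist $m,n\in M$ and $x,y\in X$ such that: - $mx$ and $yn$ are proper arcs of $R$; - $z_{k-1}z_k=m\beta(x)\in A_d$; - $z_{\ell-1}z_\ell=\beta(y)n\in A_u$.
   Context: **Digraphs.** - A digraph $G$ is a pair $(V(G),A(G))$, where $V(G)$ is a finite non-empty set and $A(G)\subseteq V(G)\times V(G)$. Arcs are written $vw$. - An arc $vw$ with $v\ne w$ is proper. - Two vertices $u,w$ are adjacent if $uw\in A(G)$ or $wu\in A(G)$. $N_G(v)$ is the set of $w\ne v$ adjacent to $v$. - A walk is a sequence $v_0,\dots,v_I$ with $I\ge1$ and $v_{i-1}v_i\in A(G)$ for all $i$. - A set $X\subseteq V(G)$ is convex if every walk starting and ending in $X$ has all its vertices in $X$. **Rearrangement setting.** - $R=(Z,A(R))$ is a digraph. - $X,M\subseteq Z$ are disjoint. - $Y\subseteq Z$ satisfies $M\cap Y=\emptyset$ and $M\cap N_R(y)=\emptyset$ for all $y\in Y$. - $\beta:X\to Y$ is a map. - $S$ is the digraph with $V(S)=Z$ and $A(S)=A_r\cup A_d\cup A_u$, where: - $A_r=A(R)\setminus((M\times X)\cup(X\times M))$;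 - $A_d=\{m\beta(x): mx\in A(R)\cap(M\times X)\}$; - $A_u=\{\beta(x)m: xm\in A(R)\cap(X\times M)\}$. *)

theory Defs
  imports Main
begin

definition digraph :: "'a set \<Rightarrow> ('a \<times> 'a) set \<Rightarrow> bool" where
  "digraph V A \<longleftrightarrow> finite V \<and> V \<noteq> {} \<and> A \<subseteq> V \<times> V"

definition adjacent :: "('a \<times> 'a) set \<Rightarrow> 'a \<Rightarrow> 'a \<Rightarrow> bool" where
  "adjacent A u w \<longleftrightarrow> (u, w) \<in> A \<or> (w, u) \<in> A"

definition nbhd :: "('a \<times> 'a) set \<Rightarrow> 'a \<Rightarrow> 'a set" where
  "nbhd A v = {w. w \<noteq> v \<and> adjacent A v w}"

definition is_walk :: "('a \<times> 'a) set \<Rightarrow> (nat \<Rightarrow> 'a) \<Rightarrow> nat \<Rightarrow> bool" where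
  "is_walk A z I \<longleftrightarrow> 1 \<le> I \<and> (\<forall>i\<in>{1..I}. (z (i - 1), z i) \<in> A)"

definition convex :: "('a \<times> 'a) set \<Rightarrow> 'a set \<Rightarrow> bool" where
  "convex A X \<longleftrightarrow> (\<forall>z I. is_walk A z I \<and> z 0 \<in> X \<and> z I \<in> X \<longrightarrow> (\<forall>i\<in>{0..I}. z i \<in> X))"

definition Ar :: "('a \<times> 'a) set \<Rightarrow> 'a set \<Rightarrow> 'a set \<Rightarrow> ('a \<times> 'a) set" where
  "Ar AR X M = AR - ((M \<times> X) \<union> (X \<times> M))"

definition Ad :: "('a \<times> 'a) set \<Rightarrow> 'a set \<Rightarrow> 'a set \<Rightarrow> ('a \<Rightarrow> 'a) \<Rightarrow> ('a \<times> 'a) set" where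
  "Ad AR X M \<beta> = {(m, \<beta> x) | m x. (m, x) \<in> AR \<inter> (M \<times> X)}"

definition Au :: "('a \<times> 'a) set \<Rightarrow> 'a set \<Rightarrow> 'a set \<Rightarrow> ('a \<Rightarrow> 'a) \<Rightarrow> ('a \<times> 'a) set" where
  "Au AR X M \<beta> = {(\<beta> x, m) | x m. (x, m) \<in> AR \<inter> (X \<times> M)}"

definition AS :: "('a \<times> 'a) set \<Rightarrow> 'a set \<Rightarrow> 'a set \<Rightarrow> ('a \<Rightarrow> 'a) \<Rightarrow> ('a \<times> 'a) set" where
  "AS AR X M \<beta> = Ar AR X M \<union> Ad AR X M \<beta> \<union> Au AR X M \<beta>"

definition rearrangement_setting ::
  "'a set \<Rightarrow> ('a \<times> 'a) set \<Rightarrow> 'a set \<Rightarrow> 'a set \<Rightarrow> 'a set \<Rightarrow> ('a \<Rightarrow> 'a) \<Rightarrow> bool" where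
  "rearrangement_setting Z AR X M Y \<beta> \<longleftrightarrow>
     digraph Z AR \<and> X \<subseteq> Z \<and> M \<subseteq> Z \<and> Y \<subseteq> Z \<and> X \<inter> M = {} \<and>
     M \<inter> Y = {} \<and> (\<forall>y\<in>Y. M \<inter> nbhd AR y = {}) \<and> (\<forall>x\<in>X. \<beta> x \<in> Y)"

end

theory Submission
  imports Defs
begin

text \<open>
  Call an arc of the walk in S that is not in A_r a detour: it is either an A_d arc from M to Y or
  an A_u arc from Y to M, and between two consecutive detours the walk runs inside R. If the first
  of two consecutive detours is an A_u arc beta(y) n, the R-walk continues from n either to a vertex
  of Y (impossible: no walk from M to Y) or to the tail m of an A_d arc m beta(x), and then
  y, n, ..., m, x is a walk from X to X through n, contradicting convexity. Symmetrically the second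
  one must be an A_u arc. So consecutive detours go A_d then A_u, and a middle one of three
  detours would have to be both.
\<close>

lemma is_walk_arc:
  assumes "(u, v) \<in> A"
  shows "is_walk A (\<lambda>t. if t = 0 then u else v) 1"
  using assms by (simp add: is_walk_def)

lemma is_walk_append:
  assumes w1: "is_walk A w1 J1" and w2: "is_walk A w2 J2" and join: "w2 0 = w1 J1"
  shows "is_walk A (\<lambda>t. if t \<le> J1 then w1 t else w2 (t - J1)) (J1 + J2)"
  unfolding is_walk_def
proof (intro conjI ballI)
  show "1 \<le> J1 + J2" using w2 by (simp add: is_walk_def)
next
  fix i assume i: "i \<in> {1..J1 + J2}"
  show "(if i - 1 \<le> J1 then w1 (i - 1) else w2 (i - 1 - J1), if i \<le> J1 then w1 i else w2 (i - J1)) \<in> A"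
  proof (cases "i \<le> J1")
    case True
    then show ?thesis using w1 i by (auto simp: is_walk_def)
  next
    case False
    then have "i - J1 \<in> {1..J2}" using i by auto
    with w2 have "(w2 (i - J1 - 1), w2 (i - J1)) \<in> A" unfolding is_walk_def by blast
    moreover have "(if i - 1 \<le> J1 then w1 (i - 1) else w2 (i - 1 - J1)) = w2 (i - J1 - 1)"
    proof (cases "i - 1 = J1")
      case True
      then show ?thesis using join by simp
    next
      case False
      with \<open>\<not> i \<le> J1\<close> have "\<not> i - 1 \<le> J1" by linarith
      then show ?thesis by (simp add: diff_right_commute)
    qed
    ultimately show ?thesis using False by simp
  qed
qed

lemma trancl_imp_ex_walk:
  assumes "(u, v) \<in> A\<^sup>+"
  shows "\<exists>w J. is_walk A w J \<and> w 0 = u \<and> w J = v"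
  using assms
proof (induction rule: trancl_induct)
  case (base v)
  then show ?case using is_walk_arc by fastforce
next
  case (step v v')
  then obtain w J where w: "is_walk A w J" "w 0 = u" "w J = v" by blast
  have "is_walk A (\<lambda>t. if t \<le> J then w t else (if t - J = 0 then v else v')) (J + 1)"
    using is_walk_append[OF w(1) is_walk_arc[OF step(2)]] w(3) by simp
  with w(2) show ?case by fastforce
qed

lemma arcs_imp_rtrancl:
  fixes z :: "nat \<Rightarrow> 'a"
  assumes "i \<le> j" and "\<forall>t\<in>{i<..j}. (z (t - 1), z t) \<in> A"
  shows "(z i, z j) \<in> A\<^sup>*"
  using assms
proof (induction j)
  case 0
  then show ?case by simp
next
  case (Suc j)
  show ?case
  proof (cases "i = Suc j")
    case True
    then show ?thesis by simp
  next
    case False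
    with Suc.prems have "i \<le> j" "Suc j \<in> {i<..Suc j}" by auto
    with Suc have "(z i, z j) \<in> A\<^sup>*" "(z j, z (Suc j)) \<in> A" by fastforce+
    then show ?thesis by simp
  qed
qed

lemma no_walk_imp_not_rtrancl:
  assumes "P \<inter> Q = {}" and "\<not> (\<exists>w J. is_walk A w J \<and> w 0 \<in> P \<and> w J \<in> Q)"
    and "u \<in> P" "v \<in> Q"
  shows "(u, v) \<notin> A\<^sup>*"
  using assms trancl_imp_ex_walk[of u v A] by (auto simp: rtrancl_eq_or_trancl)

lemma convexD:
  assumes conv: "convex A X" and "x \<in> X" "x' \<in> X"
    and xv: "(x, v) \<in> A\<^sup>+" and vx': "(v, x') \<in> A\<^sup>+"
  shows "v \<in> X"
proof -
  obtain w1 J1 where w1: "is_walk A w1 J1" "w1 0 = x" "w1 J1 = v"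
    using trancl_imp_ex_walk[OF xv] by blast
  obtain w2 J2 where w2: "is_walk A w2 J2" "w2 0 = v" "w2 J2 = x'"
    using trancl_imp_ex_walk[OF vx'] by blast
  define w where "w t = (if t \<le> J1 then w1 t else w2 (t - J1))" for t
  have "is_walk A w (J1 + J2)"
    unfolding w_def using is_walk_append[OF w1(1) w2(1)] w1(3) w2(2) by simp
  moreover have "w 0 = x" "w (J1 + J2) = x'" "w J1 = v"
    using w1 w2 by (auto simp: w_def is_walk_def)
  ultimately show ?thesis using conv \<open>x \<in> X\<close> \<open>x' \<in> X\<close>
    unfolding convex_def by (metis atLeastAtMost_iff le_add1 le0)
qed

definition consecutive :: "nat set \<Rightarrow> nat \<Rightarrow> nat \<Rightarrow> bool" where
  "consecutive K i j \<longleftrightarrow> i \<in> K \<and> j \<in> K \<and> i < j \<and> (\<forall>t\<in>K. \<not> (i < t \<and> t < j))"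

lemma ex_consecutive_below:
  assumes "finite K" "a \<in> K" "b \<in> K" "a < b"
  shows "\<exists>i. consecutive K i b"
proof -
  let ?L = "{t \<in> K. t < b}"
  have "finite ?L" "?L \<noteq> {}" using assms by auto
  then have "Max ?L \<in> ?L" by (rule Max_in)
  moreover have "t \<le> Max ?L" if "t \<in> K" "t < b" for t
    using \<open>finite ?L\<close> that by simp
  ultimately have "consecutive K (Max ?L) b"
    using \<open>b \<in> K\<close> unfolding consecutive_def by (auto simp: not_less)
  then show ?thesis ..
qed

lemma ex_consecutive_above:
  assumes "finite K" "a \<in> K" "b \<in> K" "a < b"
  shows "\<exists>j. consecutive K a j"
proof -
  let ?R = "{t \<in> K. a < t}"
  have "finite ?R" "?R \<noteq> {}" using assms by auto
  then have "Min ?R \<in> ?R" by (rule Min_in)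
  moreover have "Min ?R \<le> t" if "t \<in> K" "a < t" for t
    using \<open>finite ?R\<close> that by simp
  ultimately have "consecutive K a (Min ?R)"
    using \<open>a \<in> K\<close> unfolding consecutive_def by (auto dest: leD)
  then show ?thesis ..
qed

lemma card_le_two_if_consecutive_alternate:
  assumes "finite K"
    and alternate: "\<And>i j. consecutive K i j \<Longrightarrow> P i \<and> Q j"
    and disjoint: "\<And>i. \<not> (P i \<and> Q i)"
  shows "card K \<le> 2"
proof (rule ccontr)
  assume "\<not> card K \<le> 2"
  moreover have "card {Min K, Max K} \<le> 2" by (simp add: card_insert_if)
  ultimately have "card (K - {Min K, Max K}) > 0"
    using diff_card_le_card_Diff[of "{Min K, Max K}" K] by simp
  then obtain b where b: "b \<in> K" "b \<noteq> Min K" "b \<noteq> Max K"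
    by (auto simp: card_gt_0_iff)
  have "K \<noteq> {}" using b by blast
  with \<open>finite K\<close> have "Min K \<in> K" "Max K \<in> K" by (simp_all add: Min_in Max_in)
  moreover have "Min K < b" "b < Max K"
    using b \<open>finite K\<close> by (simp_all add: order.not_eq_order_implies_strict)
  ultimately obtain i j where "consecutive K i b" "consecutive K b j"
    using ex_consecutive_below[OF \<open>finite K\<close>] ex_consecutive_above[OF \<open>finite K\<close>] b(1)
    by blast
  then show False using alternate disjoint by blast
qed

lemma consecutive_doubleton:
  assumes "k < l"
  shows "consecutive {k, l} k l"
  using assms by (auto simp: consecutive_def)

lemma rtrancl_between_consecutive:
  fixes z :: "nat \<Rightarrow> 'a"
  assumes "consecutive {t \<in> {1..I}. (z (t - 1), z t) \<notin> A} i j"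
  shows "(z i, z (j - 1)) \<in> A\<^sup>*"
proof (rule arcs_imp_rtrancl)
  from assms have "1 \<le> i" "j \<le> I" "i < j"
    and gap: "\<And>t. 1 \<le> t \<Longrightarrow> t \<le> I \<Longrightarrow> (z (t - 1), z t) \<notin> A \<Longrightarrow> \<not> (i < t \<and> t < j)"
    unfolding consecutive_def by auto
  then show "i \<le> j - 1" by linarith
  show "\<forall>t\<in>{i<..j - 1}. (z (t - 1), z t) \<in> A"
  proof
    fix t assume "t \<in> {i<..j - 1}"
    with \<open>1 \<le> i\<close> \<open>j \<le> I\<close> have "1 \<le> t" "t \<le> I" "i < t" "t < j" by auto
    with gap show "(z (t - 1), z t) \<in> A" by blast
  qed
qed

lemma Ad_subset:
  assumes "rearrangement_setting Z AR X M Y \<beta>"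
  shows "Ad AR X M \<beta> \<subseteq> M \<times> Y"
  using assms by (auto simp: rearrangement_setting_def Ad_def)

lemma Au_subset:
  assumes "rearrangement_setting Z AR X M Y \<beta>"
  shows "Au AR X M \<beta> \<subseteq> Y \<times> M"
  using assms by (auto simp: rearrangement_setting_def Au_def)

lemma AdE:
  assumes "rearrangement_setting Z AR X M Y \<beta>" and "p \<in> Ad AR X M \<beta>"
  obtains m x where "p = (m, \<beta> x)" "(m, x) \<in> AR" "m \<noteq> x" "m \<in> M" "x \<in> X"
  using assms unfolding Ad_def rearrangement_setting_def by blast

lemma AuE:
  assumes "rearrangement_setting Z AR X M Y \<beta>" and "p \<in> Au AR X M \<beta>"
  obtains y n where "p = (\<beta> y, n)" "(y, n) \<in> AR" "y \<noteq> n" "y \<in> X" "n \<in> M"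
  using assms unfolding Au_def rearrangement_setting_def by blast

lemma Ad_Au_disjoint:
  assumes "rearrangement_setting Z AR X M Y \<beta>"
  shows "Ad AR X M \<beta> \<inter> Au AR X M \<beta> = {}"
  using Ad_subset[OF assms] Au_subset[OF assms] assms
  by (auto simp: rearrangement_setting_def)

context
  fixes Z X M Y :: "'a set" and AR :: "('a \<times> 'a) set" and \<beta> :: "'a \<Rightarrow> 'a"
  assumes setting: "rearrangement_setting Z AR X M Y \<beta>"
    and conv: "convex AR X"
    and noMY: "\<not> (\<exists>w J. is_walk AR w J \<and> w 0 \<in> M \<and> w J \<in> Y)"
    and noYM: "\<not> (\<exists>w J. is_walk AR w J \<and> w 0 \<in> Y \<and> w J \<in> M)"
begin

lemma detours_alternate:
  assumes p: "p \<in> Ad AR X M \<beta> \<union> Au AR X M \<beta>" and q: "q \<in> Ad AR X M \<beta> \<union> Au AR X M \<beta>"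
    and path: "(snd p, fst q) \<in> AR\<^sup>*"
  shows "p \<in> Ad AR X M \<beta> \<and> q \<in> Au AR X M \<beta>"
proof -
  have XM: "X \<inter> M = {}" and MY: "M \<inter> Y = {}"
    using setting by (auto simp: rearrangement_setting_def)
  note AdMY = Ad_subset[OF setting] and AuYM = Au_subset[OF setting]
  have p_Ad: "p \<in> Ad AR X M \<beta>"
  proof (rule ccontr)
    assume "p \<notin> Ad AR X M \<beta>"
    with p have "p \<in> Au AR X M \<beta>" by blast
    then obtain y n where yn: "p = (\<beta> y, n)" "(y, n) \<in> AR" "y \<in> X" "n \<in> M"
      by (rule AuE[OF setting])
    show False
    proof (cases "q \<in> Au AR X M \<beta>")
      case True
      then have "fst q \<in> Y" using AuYM by auto
      then show False
        using no_walk_imp_not_rtrancl[OF MY noMY] path yn by auto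
    next
      case False
      with q have "q \<in> Ad AR X M \<beta>" by blast
      then obtain m x where mx: "q = (m, \<beta> x)" "(m, x) \<in> AR" "x \<in> X"
        by (rule AdE[OF setting])
      from path yn mx have "(y, n) \<in> AR\<^sup>+" "(n, x) \<in> AR\<^sup>+"
        by (auto intro: rtrancl_into_trancl1)
      then have "n \<in> X" using convexD[OF conv \<open>y \<in> X\<close> \<open>x \<in> X\<close>] by blast
      with XM \<open>n \<in> M\<close> show False by blast
    qed
  qed
  have "q \<in> Au AR X M \<beta>"
  proof (rule ccontr)
    assume "q \<notin> Au AR X M \<beta>"
    with q have "fst q \<in> M" using AdMY by auto
    moreover have "snd p \<in> Y" using p_Ad AdMY by auto
    ultimately show False
      using no_walk_imp_not_rtrancl[OF _ noYM] MY path by blast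
  qed
  with p_Ad show ?thesis ..
qed

lemma consecutive_detours_alternate:
  assumes walk: "is_walk (AS AR X M \<beta>) z I"
    and ij: "consecutive {t \<in> {1..I}. (z (t - 1), z t) \<notin> Ar AR X M} i j"
  shows "(z (i - 1), z i) \<in> Ad AR X M \<beta> \<and> (z (j - 1), z j) \<in> Au AR X M \<beta>"
proof (rule detours_alternate)
  have "t \<in> {1..I} \<Longrightarrow> (z (t - 1), z t) \<notin> Ar AR X M \<Longrightarrow>
      (z (t - 1), z t) \<in> Ad AR X M \<beta> \<union> Au AR X M \<beta>" for t
    using walk by (auto simp: is_walk_def AS_def)
  then show "(z (i - 1), z i) \<in> Ad AR X M \<beta> \<union> Au AR X M \<beta>"
    and "(z (j - 1), z j) \<in> Ad AR X M \<beta> \<union> Au AR X M \<beta>"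
    using ij by (auto simp: consecutive_def)
  have "Ar AR X M \<subseteq> AR" by (auto simp: Ar_def)
  then show "(snd (z (i - 1), z i), fst (z (j - 1), z j)) \<in> AR\<^sup>*"
    using rtrancl_mono rtrancl_between_consecutive[OF ij] by auto
qed

end

theorem lemma6:
  fixes Z X M Y :: "'a set" and AR :: "('a \<times> 'a) set" and \<beta> :: "'a \<Rightarrow> 'a"
    and z :: "nat \<Rightarrow> 'a" and I :: nat
  assumes setting: "rearrangement_setting Z AR X M Y \<beta>"
    and conv: "convex AR X"
    and noMY: "\<not> (\<exists>w J. is_walk AR w J \<and> w 0 \<in> M \<and> w J \<in> Y)"
    and noYM: "\<not> (\<exists>w J. is_walk AR w J \<and> w 0 \<in> Y \<and> w J \<in> M)"
    and walk: "is_walk (AS AR X M \<beta>) z I"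
  defines "K \<equiv> {i\<in>{1..I}. (z (i - 1), z i) \<notin> Ar AR X M}"
  shows "card K \<le> 2 \<and>
    (\<forall>k l. K = {k, l} \<and> k < l \<longrightarrow>
      (\<exists>m n x y. m \<in> M \<and> n \<in> M \<and> x \<in> X \<and> y \<in> X \<and>
         (m, x) \<in> AR \<and> m \<noteq> x \<and> (y, n) \<in> AR \<and> y \<noteq> n \<and>
         (z (k - 1), z k) = (m, \<beta> x) \<and> (m, \<beta> x) \<in> Ad AR X M \<beta> \<and>
         (z (l - 1), z l) = (\<beta> y, n) \<and> (\<beta> y, n) \<in> Au AR X M \<beta>))"
proof -
  have alternate: "(z (i - 1), z i) \<in> Ad AR X M \<beta> \<and> (z (j - 1), z j) \<in> Au AR X M \<beta>"
    if "consecutive K i j" for i j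
    using consecutive_detours_alternate[OF setting conv noMY noYM walk] that by (simp add: K_def)
  have "card K \<le> 2"
    using card_le_two_if_consecutive_alternate[of K "\<lambda>i. (z (i - 1), z i) \<in> Ad AR X M \<beta>"
        "\<lambda>j. (z (j - 1), z j) \<in> Au AR X M \<beta>"] alternate Ad_Au_disjoint[OF setting]
    by (auto simp: K_def)
  moreover have "\<exists>m n x y. m \<in> M \<and> n \<in> M \<and> x \<in> X \<and> y \<in> X \<and>
         (m, x) \<in> AR \<and> m \<noteq> x \<and> (y, n) \<in> AR \<and> y \<noteq> n \<and>
         (z (k - 1), z k) = (m, \<beta> x) \<and> (m, \<beta> x) \<in> Ad AR X M \<beta> \<and>
         (z (l - 1), z l) = (\<beta> y, n) \<and> (\<beta> y, n) \<in> Au AR X M \<beta>"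
    if "K = {k, l}" "k < l" for k l
  proof -
    have down: "(z (k - 1), z k) \<in> Ad AR X M \<beta>" and up: "(z (l - 1), z l) \<in> Au AR X M \<beta>"
      using alternate consecutive_doubleton[OF \<open>k < l\<close>] \<open>K = {k, l}\<close> by simp_all
    obtain m x where mx: "(z (k - 1), z k) = (m, \<beta> x)" "(m, x) \<in> AR" "m \<noteq> x" "m \<in> M" "x \<in> X"
      using AdE[OF setting down] .
    obtain y n where yn: "(z (l - 1), z l) = (\<beta> y, n)" "(y, n) \<in> AR" "y \<noteq> n" "y \<in> X" "n \<in> M"
      using AuE[OF setting up] .
    show ?thesis
      using mx yn down up by (intro exI[of _ m] exI[of _ n] exI[of _ x] exI[of _ y]) simp
  qed
  ultimately show ?thesis by blast
qed

end
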